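(* Let $R$ be a ring with $2\notin U(R)$, and let $G$ be a non-trivial abelian group such that the group ring $RG$ is a GWNC ring. Then $G$ is a $2$-group and $2\in{\rm Nil}(R)$.
   Context: All rings are associative with identity. For a ring $S$, $U(S)$, ${\rm Nil}(S)$, ${\rm Id}(S)$ denote units, nilpotents, idempotents. $S$ is GWNC if every $a\in S\setminus U(S)$ can be written as $a=q+e$ or $a=q-e$ with $q\in{\rm Nil}(S)$, $e\in{\rm Id}(S)$. A group is a $p$-group if the order of each of its elements is a power of the prime $p$. *)

theory Defs
  imports Main "HOL-Library.Poly_Mapping"
begin

definition ring_unit :: "'a::ring_1 \<Rightarrow> bool" where
  "ring_unit a \<longleftrightarrow> (\<exists>b. a * b = 1 \<and> b * a = 1)"

definition ring_nilpotent :: "'a::ring_1 \<Rightarrow> bool" where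
  "ring_nilpotent a \<longleftrightarrow> (\<exists>n::nat. a ^ n = 0)"

definition ring_idempotent :: "'a::ring_1 \<Rightarrow> bool" where
  "ring_idempotent e \<longleftrightarrow> e * e = e"

definition GWNC :: "'a::ring_1 itself \<Rightarrow> bool" where
  "GWNC _ \<longleftrightarrow> (\<forall>a::'a. \<not> ring_unit a \<longrightarrow>
      (\<exists>q e. ring_nilpotent q \<and> ring_idempotent e \<and> (a = q + e \<or> a = q - e)))"

text \<open>Abelian groups are written additively (type class ab_group_add).
  The order of an element g is the least n > 0 with n g = 0, and 0 if no such n exists.\<close>

definition add_order :: "'g::ab_group_add \<Rightarrow> nat" where
  "add_order g = (if \<exists>n>0. ((+) g ^^ n) 0 = 0
                  then (LEAST n. n > 0 \<and> ((+) g ^^ n) 0 = 0) else 0)"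

definition is_p_group :: "nat \<Rightarrow> 'g::ab_group_add itself \<Rightarrow> bool" where
  "is_p_group p _ \<longleftrightarrow> (\<forall>g::'g. \<exists>k::nat. add_order g = p ^ k)"

text \<open>The group ring RG is the ring of finitely supported functions G \<Rightarrow> R with
  convolution product: the poly_mapping type from HOL-Library.Poly_Mapping.\<close>

end

(* In a GWNC ring, a central non-unit a = q +- e (q nilpotent, e idempotent) has a (a - 1) or
   a (a + 1) nilpotent. The augmentation of RG shows that 1 + g is never a unit of RG, since 2 is not a
   unit of R; for g = 0 this is the element 2, so 2 or 6 is nilpotent in RG, hence in R.

   If 2 were not nilpotent, then 6^k = 0 and Bezout splits 1 = e + e' into integral idempotents
   with 3^k e = 0 and 2^k e' = 0, both non-zero. GWNC applied to e g makes e g -+ e nilpotent, and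
   a unipotent element e + N of the corner ring eRe with p^k e = 0 satisfies (e + N)^(p^j) = e for
   large j, as p^k divides (p^j choose i) for 0 < i < p^n. So a non-zero g would have both 3-power
   and 2-power order. Once 2 is nilpotent, GWNC applied to 1 + g makes g + 1 nilpotent, and the same
   unipotence argument with e = 1 and p = 2 shows that g has 2-power order. *)

theory Submission
  imports Defs "HOL-Computational_Algebra.Primes"
begin

section \<open>Nilpotents, idempotents and GWNC rings\<close>

definition central :: "'a::ring_1 \<Rightarrow> bool" where
  "central c \<longleftrightarrow> (\<forall>y. c * y = y * c)"

lemma central_of_int [simp]: "central (of_int z)"
  by (simp add: central_def mult_of_int_commute)

lemma central_one [simp]: "central 1"
  by (simp add: central_def)

lemma central_numeral [simp]: "central (numeral w :: 'a::ring_1)"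
  using central_of_int[of "numeral w"] by simp

lemma central_mult: "central a \<Longrightarrow> central b \<Longrightarrow> central (a * b)"
  unfolding central_def by (metis mult.assoc)

lemma central_add: "central a \<Longrightarrow> central b \<Longrightarrow> central (a + b)"
  unfolding central_def by (simp add: algebra_simps)

lemma power_mult_commuting:
  fixes a b :: "'a::monoid_mult"
  assumes "a * b = b * a"
  shows "(a * b) ^ n = a ^ n * b ^ n"
proof (induction n)
  case (Suc n)
  have "b * a ^ n = a ^ n * b"
    using power_commuting_commutes[OF assms] by simp
  then have "a * b * (a ^ n * b ^ n) = a * a ^ n * (b * b ^ n)"
    by (metis mult.assoc)
  then show ?case
    using Suc by simp
qed simp

lemma nilpotent_mult_commuting:
  fixes a b :: "'a::ring_1"
  assumes "ring_nilpotent a" "a * b = b * a"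
  shows "ring_nilpotent (a * b)"
proof -
  obtain n where "a ^ n = 0"
    using assms(1) unfolding ring_nilpotent_def by blast
  then have "(a * b) ^ n = 0"
    by (simp add: power_mult_commuting[OF assms(2)])
  then show ?thesis
    unfolding ring_nilpotent_def by blast
qed

lemma binomial_commuting:
  fixes a b :: "'a::semiring_1"
  assumes ab: "a * b = b * a"
  shows "(a + b) ^ n = (\<Sum>i\<le>n. of_nat (n choose i) * a ^ i * b ^ (n - i))"
proof (induction n)
  case (Suc n)
  have ba: "b * (a ^ i * y) = a ^ i * (b * y)" for i y
    using power_commuting_commutes[OF ab, of i] by (metis mult.assoc)
  have nat_comm: "x * (of_nat m * y) = of_nat m * (x * y)" for x y :: 'a and m
    by (metis mult.assoc mult_of_nat_commute)
  have "(a + b) ^ Suc n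
      = (\<Sum>i\<le>n. of_nat (n choose i) * a ^ Suc i * b ^ (n - i))
      + (\<Sum>i\<le>n. of_nat (n choose i) * a ^ i * b ^ Suc (n - i))"
    unfolding power_Suc Suc distrib_right sum_distrib_left
    by (simp only: mult.assoc nat_comm ba sum.distrib)
  also have "(\<Sum>i\<le>n. of_nat (n choose i) * a ^ i * b ^ Suc (n - i))
      = b ^ Suc n + (\<Sum>i\<le>n. of_nat (n choose Suc i) * a ^ Suc i * b ^ (n - i))"
  proof -
    have "(\<Sum>i\<le>n. of_nat (n choose i) * a ^ i * b ^ Suc (n - i))
        = (\<Sum>i\<le>Suc n. of_nat (n choose i) * a ^ i * b ^ (Suc n - i))"
      by (simp add: Suc_diff_le binomial_eq_0)
    then show ?thesis
      by (simp only: sum.atMost_Suc_shift) simp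
  qed
  also have "(\<Sum>i\<le>n. of_nat (n choose i) * a ^ Suc i * b ^ (n - i))
      + (b ^ Suc n + (\<Sum>i\<le>n. of_nat (n choose Suc i) * a ^ Suc i * b ^ (n - i)))
      = (\<Sum>i\<le>Suc n. of_nat (Suc n choose i) * a ^ i * b ^ (Suc n - i))"
    by (simp only: sum.atMost_Suc_shift) (simp add: sum.distrib distrib_right add_ac)
  finally show ?case .
qed simp

lemma nilpotent_add_commuting:
  fixes a b :: "'a::ring_1"
  assumes "ring_nilpotent a" "ring_nilpotent b" "a * b = b * a"
  shows "ring_nilpotent (a + b)"
proof -
  obtain m n where m: "a ^ m = 0" and n: "b ^ n = 0"
    using assms(1,2) unfolding ring_nilpotent_def by blast
  have "of_nat (m + n choose i) * a ^ i * b ^ (m + n - i) = 0" for i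
  proof (cases "m \<le> i")
    case True
    then have "a ^ i = a ^ m * a ^ (i - m)"
      by (simp flip: power_add)
    then show ?thesis
      using m by simp
  next
    case False
    then have "m + n - i = n + (m - i)"
      by simp
    then have "b ^ (m + n - i) = b ^ n * b ^ (m - i)"
      by (simp add: power_add)
    then show ?thesis
      using n by simp
  qed
  then have "(a + b) ^ (m + n) = 0"
    by (simp add: binomial_commuting[OF assms(3)])
  then show ?thesis
    unfolding ring_nilpotent_def by blast
qed

lemma nilpotent_uminus: "ring_nilpotent (- a) \<longleftrightarrow> ring_nilpotent (a::'a::ring_1)"
proof -
  have "(- a) ^ n = 0 \<longleftrightarrow> a ^ n = 0" for n
    by (cases "even n") (simp_all add: power_minus_odd)
  then show ?thesis
    unfolding ring_nilpotent_def by simp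
qed

lemma nilpotent_mult_diff_one_if_idempotent_diff:
  fixes a q :: "'a::ring_1"
  assumes "ring_nilpotent q" "q * a = a * q" "(a - q) * (a - q) = a - q"
  shows "ring_nilpotent (a * (a - 1))"
proof -
  have "a * a - q * a - q * a + q * q = a - q"
    using assms(3) by (simp add: algebra_simps assms(2))
  then have "a * (a - 1) = q * (2 * a - q - 1)"
    by (simp add: algebra_simps mult_2 mult_2_right)
  moreover have "q * (2 * a - q - 1) = (2 * a - q - 1) * q"
    by (simp add: algebra_simps mult_2 mult_2_right assms(2))
  ultimately show ?thesis
    using nilpotent_mult_commuting[OF assms(1)] by simp
qed

lemma GWNC_central_nonunit:
  fixes a :: "'a::ring_1"
  assumes "GWNC TYPE('a)" "central a" "\<not> ring_unit a"
  shows "ring_nilpotent (a * (a - 1)) \<or> ring_nilpotent (a * (a + 1))"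
proof -
  obtain q e where q: "ring_nilpotent q" and e: "e * e = e" and "a = q + e \<or> a = q - e"
    using assms(1,3) unfolding GWNC_def ring_idempotent_def by blast
  moreover have qa: "q * a = a * q"
    using assms(2) unfolding central_def by simp
  moreover have "ring_nilpotent (a * (a + 1))" if "a = q - e"
  proof -
    \<comment> \<open>\<open>- a = - q + e\<close> is of the first kind\<close>
    have "ring_nilpotent (- a * (- a - 1))"
    proof (rule nilpotent_mult_diff_one_if_idempotent_diff)
      show "ring_nilpotent (- q)"
        using q by (simp add: nilpotent_uminus)
      show "- q * - a = - a * - q"
        using qa by simp
      show "(- a - - q) * (- a - - q) = - a - - q"
        using e that by simp
    qed
    then show ?thesis
      by (simp add: algebra_simps)
  qed
  ultimately show ?thesis
    using nilpotent_mult_diff_one_if_idempotent_diff[OF q qa] e by auto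
qed

lemma idempotent_mult_not_unit:
  fixes e x :: "'a::ring_1"
  assumes "e * e = e" "e \<noteq> 1"
  shows "\<not> ring_unit (e * x)"
proof
  assume "ring_unit (e * x)"
  then obtain y where y: "e * x * y = 1"
    unfolding ring_unit_def by blast
  have "(1 - e) * e = 0"
    using assms(1) by (simp add: left_diff_distrib)
  then have "(1 - e) * (e * x * y) = 0"
    by (simp flip: mult.assoc)
  with y assms(2) show False
    by simp
qed

lemma prime_power_dvd_choose:
  fixes p :: nat
  assumes p: "prime p" and i: "0 < i" "i < p ^ m" and j: "k + m \<le> j"
  shows "p ^ k dvd (p ^ j choose i)"
proof -
  have "i \<noteq> 0" "\<not> is_unit p"
    using i(1) prime_gt_1_nat[OF p] by simp_all
  then obtain b where ib: "i = p ^ multiplicity p i * b" and b: "\<not> p dvd b"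
    by (rule multiplicity_decompose')
  define a where "a = multiplicity p i"
  note ib = ib[folded a_def]
  have "p ^ a \<le> i"
    using ib i(1) by (simp add: dvd_imp_le)
  then have "p ^ a < p ^ m"
    using i(2) by simp
  then have am: "a < m"
    using p prime_gt_1_nat power_less_imp_less_exp by blast
  then have "a + (j - a) = j"
    using j by simp
  then have pj: "p ^ j = p ^ a * p ^ (j - a)"
    by (metis power_add)
  have "p ^ a * (b * (p ^ j choose i)) = p ^ a * (p ^ (j - a) * (p ^ j - 1 choose (i - 1)))"
    using times_binomial_minus1_eq[OF i(1), of "p ^ j"] ib pj by (simp add: ac_simps)
  then have "p ^ (j - a) dvd b * (p ^ j choose i)"
    using p by (simp add: prime_gt_0_nat)
  moreover have "0 < j - a"
    using am j by simp
  ultimately have "p ^ (j - a) dvd (p ^ j choose i)"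
    using prime_power_dvd_multD[OF prime_imp_prime_elem[OF p]] b by blast
  moreover have "p ^ k dvd p ^ (j - a)"
    by (rule le_imp_power_dvd) (use am j in simp)
  ultimately show ?thesis
    by (rule dvd_trans[rotated])
qed

lemma idempotent_power_Suc:
  fixes e :: "'a::monoid_mult"
  assumes "e * e = e"
  shows "e ^ Suc m = e"
  by (induction m) (simp_all add: assms)

lemma unipotent_prime_power:
  fixes e x :: "'a::ring_1"
  assumes p: "prime p" and idem: "e * e = e" and ex: "e * x = x" and xe: "x * e = x"
    and nil: "ring_nilpotent x" and tors: "of_nat (p ^ k) * e = 0"
  shows "\<exists>j. (e + x) ^ (p ^ j) = e"
proof -
  obtain n where xn: "x ^ n = 0"
    using nil unfolding ring_nilpotent_def by blast
  define M where "M = p ^ (k + n)"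
  have "0 < M"
    using p by (simp add: M_def prime_gt_0_nat)
  have vanish: "of_nat (M choose i) * x ^ i * e ^ (M - i) = 0" if "0 < i" for i
  proof (cases "n \<le> i")
    case True
    then have "x ^ i = x ^ n * x ^ (i - n)"
      by (simp flip: power_add)
    then show ?thesis
      using xn by simp
  next
    case False
    have "i < p ^ n"
      using False less_exp[of n] prime_ge_2_nat[OF p] power_mono[of 2 p n] by linarith
    then have "p ^ k dvd (M choose i)"
      unfolding M_def using p that by (simp add: prime_power_dvd_choose)
    then obtain c where c: "M choose i = c * p ^ k"
      by (metis dvd_def mult.commute)
    have "x ^ i = e * x ^ i"
      using that ex by (cases i) (simp_all flip: mult.assoc)
    then have "of_nat (M choose i) * x ^ i = of_nat c * (of_nat (p ^ k) * e) * x ^ i"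
      by (simp add: c mult.assoc)
    then show ?thesis
      using tors by simp
  qed
  have "(e + x) ^ M = (\<Sum>i\<le>M. of_nat (M choose i) * x ^ i * e ^ (M - i))"
    using binomial_commuting[of x e M] ex xe by (simp add: add.commute)
  also have "\<dots> = (\<Sum>i\<le>M. if i = 0 then e else 0)"
    using vanish \<open>0 < M\<close> idempotent_power_Suc[OF idem, of "M - 1"] by (intro sum.cong) auto
  also have "\<dots> = e"
    by simp
  finally show ?thesis
    unfolding M_def by blast
qed

lemma of_int_eq_0_if_dvd:
  assumes "(of_int N :: 'a::ring_1) = 0" "N dvd a"
  shows "(of_int a :: 'a) = 0"
  using assms by (auto elim!: dvdE)

lemma idempotent_of_coprime_factorization:
  fixes m n u v :: int
  assumes mn: "(of_int (m * n) :: 'a::ring_1) = 0" and uv: "u * m + v * n = 1"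
  shows "(of_int (u * m) :: 'a) * of_int (u * m) = of_int (u * m)"
    and "of_int n * (of_int (u * m) :: 'a) = 0"
    and "of_int m * (of_int (v * n) :: 'a) = 0"
    and "of_int (u * m) + (of_int (v * n) :: 'a) = 1"
proof -
  have "u * m * (u * m) - u * m = u * m * (u * m + v * n - 1) + m * n * (- u * v)"
    by (simp add: algebra_simps)
  then have "(of_int (u * m * (u * m) - u * m) :: 'a) = 0"
    by (intro of_int_eq_0_if_dvd[OF mn]) (simp add: uv)
  then show "(of_int (u * m) :: 'a) * of_int (u * m) = of_int (u * m)"
    by simp
  have "(of_int (n * (u * m)) :: 'a) = 0"
    by (rule of_int_eq_0_if_dvd[OF mn], rule dvdI[of _ _ u]) (simp add: algebra_simps)
  then show "of_int n * (of_int (u * m) :: 'a) = 0"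
    by (simp only: of_int_mult)
  have "(of_int (m * (v * n)) :: 'a) = 0"
    by (rule of_int_eq_0_if_dvd[OF mn], rule dvdI[of _ _ v]) (simp add: algebra_simps)
  then show "of_int m * (of_int (v * n) :: 'a) = 0"
    by (simp only: of_int_mult)
  show "of_int (u * m) + (of_int (v * n) :: 'a) = 1"
    unfolding of_int_add[symmetric] uv by simp
qed

lemma unit_two_if_nilpotent_three:
  assumes "ring_nilpotent (3::'a::ring_1)"
  shows "ring_unit (2::'a)"
proof -
  obtain k where k: "(3::'a) ^ k = 0"
    using assms unfolding ring_nilpotent_def by blast
  have "odd ((3::nat) ^ k)"
    by simp
  then obtain t :: nat where t: "(3::nat) ^ k = 2 * t + 1"
    by (rule oddE)
  have "(of_nat (2 * t + 1) :: 'a) = of_nat (3 ^ k)"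
    by (simp only: t)
  also have "\<dots> = 0"
    using k by simp
  finally have "1 = - (2 * of_nat t :: 'a)"
    by (simp add: add_eq_0_iff add.commute)
  then have "2 * - of_nat t = (1::'a)" "- of_nat t * 2 = (1::'a)"
    by (simp_all add: mult_of_nat_commute)
  then show ?thesis
    unfolding ring_unit_def by blast
qed

section \<open>Multiples and orders in abelian groups\<close>

definition natmul :: "nat \<Rightarrow> 'g::monoid_add \<Rightarrow> 'g" where
  "natmul n g = ((+) g ^^ n) 0"

lemma natmul_0 [simp]: "natmul 0 g = 0"
  by (simp add: natmul_def)

lemma natmul_Suc [simp]: "natmul (Suc n) g = g + natmul n g"
  by (simp add: natmul_def)

lemma natmul_zero_right [simp]: "natmul n 0 = 0"
  by (induction n) simp_all

lemma natmul_add: "natmul (m + n) g = natmul m g + natmul n g"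
  by (induction m) (simp_all add: add.assoc)

lemma natmul_mult: "natmul (m * n) g = natmul m (natmul n g)"
  by (induction m) (simp_all add: natmul_add)

lemma add_order_dvd_if_natmul_eq_0:
  fixes g :: "'g::ab_group_add"
  assumes "natmul m g = 0"
  shows "add_order g dvd m"
proof (cases "m = 0")
  case False
  define d where "d = add_order g"
  have ex: "\<exists>n>0. natmul n g = 0"
    using assms False by blast
  then have d: "d = (LEAST n. n > 0 \<and> natmul n g = 0)"
    unfolding d_def add_order_def natmul_def by simp
  have "d > 0" "natmul d g = 0"
    unfolding d using LeastI_ex[OF ex] by simp_all
  have least: "\<not> (n > 0 \<and> natmul n g = 0)" if "n < d" for n
    using not_less_Least[of n "\<lambda>n. n > 0 \<and> natmul n g = 0"] that unfolding d by blast
  have "natmul (m div d * d) g = 0"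
    using \<open>natmul d g = 0\<close> by (simp add: natmul_mult)
  then have "natmul (m mod d) g = 0"
    using assms natmul_add[of "m div d * d" "m mod d" g] by simp
  moreover have "m mod d < d"
    using \<open>d > 0\<close> by simp
  ultimately have "m mod d = 0"
    using least[of "m mod d"] by simp
  then show ?thesis
    unfolding d_def by (simp add: mod_eq_0_iff_dvd)
qed simp

lemma add_order_prime_power:
  fixes g :: "'g::ab_group_add"
  assumes "prime p" "natmul (p ^ j) g = 0"
  shows "\<exists>i. add_order g = p ^ i"
  using add_order_dvd_if_natmul_eq_0[OF assms(2)] divides_primepow_nat[OF assms(1)] by blast

lemma natmul_coprime_eq_0:
  fixes g :: "'g::monoid_add"
  assumes "coprime m n" "natmul m g = 0" "natmul n g = 0"
  shows "g = 0"
proof (cases "m = 0")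
  case True
  then have "n = 1"
    using assms(1) by simp
  then show ?thesis
    using assms(3) by simp
next
  case False
  then obtain x y where "m * x = n * y + gcd m n"
    using bezout_nat by blast
  then have "x * m = y * n + 1"
    using assms(1) by (simp add: mult.commute)
  then have "natmul (x * m) g = natmul (y * n) g + natmul 1 g"
    by (simp only: natmul_add)
  then show ?thesis
    using assms(2,3) by (simp add: natmul_mult)
qed

section \<open>The group ring\<close>

definition group_elem :: "'g \<Rightarrow> 'g \<Rightarrow>\<^sub>0 'r::ring_1" where
  "group_elem h = Poly_Mapping.single h 1"

lemma lookup_single_mult:
  fixes x :: "'g::ab_group_add \<Rightarrow>\<^sub>0 'r::semiring_0"
  shows "Poly_Mapping.lookup (Poly_Mapping.single h a * x) k = a * Poly_Mapping.lookup x (k - h)"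
proof -
  have "Poly_Mapping.lookup (Poly_Mapping.single h a * x) k
      = (\<Sum>l. (a when h = l) * (\<Sum>q. Poly_Mapping.lookup x q when k = l + q))"
    unfolding lookup_mult lookup_single ..
  also have "\<dots> = a * (\<Sum>q. Poly_Mapping.lookup x q when k = h + q)"
    by (simp add: when_mult)
  also have "(\<Sum>q. Poly_Mapping.lookup x q when k = h + q) = (\<Sum>q. Poly_Mapping.lookup x q when q = k - h)"
    by (rule Sum_any.cong) (auto simp: when_def algebra_simps)
  finally show ?thesis
    by simp
qed

lemma lookup_mult_single:
  fixes x :: "'g::ab_group_add \<Rightarrow>\<^sub>0 'r::semiring_0"
  shows "Poly_Mapping.lookup (x * Poly_Mapping.single h a) k = Poly_Mapping.lookup x (k - h) * a"
proof -
  have "Poly_Mapping.lookup (x * Poly_Mapping.single h a) k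
      = (\<Sum>l. Poly_Mapping.lookup x l * (\<Sum>q. (a when h = q) when k = l + q))"
    unfolding lookup_mult lookup_single ..
  also have "\<dots> = (\<Sum>l. Poly_Mapping.lookup x l * (a when k = l + h))"
  proof (rule Sum_any.cong)
    fix l
    have "(\<Sum>q. (a when h = q) when k = l + q) = (\<Sum>q. (a when k = l + q) when h = q)"
      by (rule Sum_any.cong) (simp add: when_def)
    then show "Poly_Mapping.lookup x l * (\<Sum>q. (a when h = q) when k = l + q)
        = Poly_Mapping.lookup x l * (a when k = l + h)"
      by simp
  qed
  also have "\<dots> = (\<Sum>l. Poly_Mapping.lookup x l * a when l = k - h)"
    by (rule Sum_any.cong) (auto simp: when_def algebra_simps)
  finally show ?thesis
    by simp
qed

lemma group_elem_commute: "group_elem h * x = x * (group_elem h :: 'g::ab_group_add \<Rightarrow>\<^sub>0 'r::ring_1)"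
  by (rule poly_mapping_eqI) (simp add: group_elem_def lookup_single_mult lookup_mult_single)

lemma central_group_elem: "central (group_elem h :: 'g::ab_group_add \<Rightarrow>\<^sub>0 'r::ring_1)"
  by (simp add: central_def group_elem_commute)

lemma group_elem_mult: "group_elem a * group_elem b = (group_elem (a + b) :: 'g::monoid_add \<Rightarrow>\<^sub>0 'r::ring_1)"
  by (simp add: group_elem_def mult_single)

lemma group_elem_0 [simp]: "group_elem 0 = 1"
  by (simp add: group_elem_def)

lemma single_power:
  "Poly_Mapping.single a c ^ n = (Poly_Mapping.single (natmul n a) (c ^ n) :: 'g::monoid_add \<Rightarrow>\<^sub>0 'r::semiring_1)"
  by (induction n) (simp_all add: mult_single)

lemma single_eq_single_0_imp:
  assumes "Poly_Mapping.single h c = Poly_Mapping.single 0 d" "d \<noteq> 0"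
  shows "h = 0"
  using arg_cong[OF assms(1), of "\<lambda>x. Poly_Mapping.lookup x 0"] assms(2)
  by (auto simp: lookup_single when_def split: if_splits)

lemma nilpotent_numeral_group_ring:
  "ring_nilpotent (numeral w :: 'g::monoid_add \<Rightarrow>\<^sub>0 'r::ring_1) \<longleftrightarrow> ring_nilpotent (numeral w :: 'r)"
proof -
  have "(numeral w :: 'g \<Rightarrow>\<^sub>0 'r) ^ n = Poly_Mapping.single 0 (numeral w ^ n)" for n
    by (simp add: single_power flip: single_numeral)
  moreover have "(Poly_Mapping.single 0 c :: 'g \<Rightarrow>\<^sub>0 'r) = 0 \<longleftrightarrow> c = 0" for c
    by (metis inj_single injD single_zero)
  ultimately show ?thesis
    unfolding ring_nilpotent_def by simp
qed

lemma nilpotent_group_elem_mult_cancel: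
  fixes x :: "'g::ab_group_add \<Rightarrow>\<^sub>0 'r::ring_1"
  assumes "ring_nilpotent (group_elem g * x)"
  shows "ring_nilpotent x"
proof -
  have "ring_nilpotent (group_elem g * x * group_elem (- g))"
    by (rule nilpotent_mult_commuting[OF assms]) (simp add: group_elem_commute)
  moreover have "group_elem g * x * group_elem (- g) = group_elem g * group_elem (- g) * x"
    by (metis group_elem_commute mult.assoc)
  ultimately show ?thesis
    by (simp add: group_elem_mult)
qed

definition augmentation :: "('g::ab_group_add \<Rightarrow>\<^sub>0 'r::ring_1) \<Rightarrow> 'r" where
  "augmentation x = Sum_any (Poly_Mapping.lookup x)"

lemma augmentation_add: "augmentation (x + y) = augmentation x + augmentation y"
proof -
  have "finite {k. Poly_Mapping.lookup x k \<noteq> 0}" "finite {k. Poly_Mapping.lookup y k \<noteq> 0}"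
    by (simp_all flip: keys.rep_eq)
  then show ?thesis
    unfolding augmentation_def lookup_add by (rule Sum_any.distrib)
qed

lemma augmentation_group_elem_mult: "augmentation (group_elem h * x) = augmentation x"
proof -
  have "bij (\<lambda>k. k - h)"
    by (rule bijI[OF injI surjI[of _ "\<lambda>k. k + h"]]) auto
  then have "augmentation x = (\<Sum>k. Poly_Mapping.lookup x (k - h))"
    unfolding augmentation_def by (rule Sum_any.reindex_cong) (simp add: comp_def)
  then show ?thesis
    by (simp add: augmentation_def group_elem_def lookup_single_mult)
qed

lemma augmentation_one [simp]: "augmentation 1 = 1"
  by (simp add: augmentation_def lookup_one)

lemma not_unit_one_plus_group_elem:
  assumes "\<not> ring_unit (2::'r::ring_1)"
  shows "\<not> ring_unit (1 + group_elem h :: 'g::ab_group_add \<Rightarrow>\<^sub>0 'r)"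
proof
  assume "ring_unit (1 + group_elem h :: 'g \<Rightarrow>\<^sub>0 'r)"
  then obtain y :: "'g \<Rightarrow>\<^sub>0 'r" where y: "(1 + group_elem h) * y = 1" "y * (1 + group_elem h) = 1"
    unfolding ring_unit_def by blast
  have "augmentation ((1 + group_elem h) * y) = 2 * augmentation y"
    by (simp add: distrib_right augmentation_add augmentation_group_elem_mult mult_2)
  moreover have "augmentation (y * (1 + group_elem h)) = augmentation y * 2"
    by (simp add: distrib_left augmentation_add augmentation_group_elem_mult mult_2_right
        flip: group_elem_commute)
  ultimately show False
    using y assms unfolding ring_unit_def by auto
qed

lemma natmul_prime_power_eq_0_if_unipotent:
  fixes g :: "'g::ab_group_add" and z :: int
  defines "e \<equiv> (of_int z :: 'g \<Rightarrow>\<^sub>0 'r::ring_1)"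
  assumes p: "prime p" and idem: "e * e = e" and "e \<noteq> 0" and tors: "of_nat (p ^ k) * e = 0"
    and nil: "ring_nilpotent (e * group_elem g - e) \<or> ring_nilpotent (e * group_elem g + e)"
  shows "\<exists>j. natmul (p ^ j) g = 0"
proof -
  define r :: 'r where "r = of_int z"
  have e: "e = Poly_Mapping.single 0 r"
    unfolding e_def r_def by simp
  have "r \<noteq> 0"
    using \<open>e \<noteq> 0\<close> e by auto
  have "r * r = r"
    using idem inj_single[of "0::'g"] unfolding e by (simp add: mult_single inj_eq)
  obtain c :: int where nil_c: "ring_nilpotent (of_int c * (e * group_elem g) - e)"
    using nil
  proof
    assume "ring_nilpotent (e * group_elem g - e)"
    then show thesis
      using that[of 1] by simp
  next
    assume "ring_nilpotent (e * group_elem g + e)"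
    then show thesis
      using that[of "- 1"] by (simp add: nilpotent_uminus flip: nilpotent_uminus[of "_ + e"])
  qed
  define x where "x = of_int c * (e * group_elem g)"
  have x: "x = Poly_Mapping.single g (of_int c * r)"
    unfolding x_def e group_elem_def by (simp add: mult_single flip: single_of_int)
  have "e * x = x"
    unfolding x e using \<open>r * r = r\<close> by (simp add: mult_single mult_of_int_commute flip: mult.assoc)
  moreover have "x * e = x"
    unfolding x e using \<open>r * r = r\<close> by (simp add: mult_single mult.assoc)
  ultimately have "e * (x - e) = x - e" "(x - e) * e = x - e"
    using idem by (simp_all add: right_diff_distrib left_diff_distrib)
  then obtain j where "(e + (x - e)) ^ (p ^ j) = e"
    using unipotent_prime_power[OF p idem] nil_c tors unfolding x_def by blast
  then have "Poly_Mapping.single (natmul (p ^ j) g) ((of_int c * r) ^ (p ^ j)) = Poly_Mapping.single 0 r"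
    by (simp add: x e single_power)
  then show ?thesis
    using single_eq_single_0_imp \<open>r \<noteq> 0\<close> by blast
qed

lemma natmul_prime_power_eq_0_if_GWNC:
  fixes g :: "'g::ab_group_add" and z :: int
  defines "e \<equiv> (of_int z :: 'g \<Rightarrow>\<^sub>0 'r::ring_1)"
  assumes gw: "GWNC TYPE('g \<Rightarrow>\<^sub>0 'r)" and p: "prime p" and idem: "e * e = e"
    and "e \<noteq> 0" "e \<noteq> 1" and tors: "of_nat (p ^ k) * e = 0"
  shows "\<exists>j. natmul (p ^ j) g = 0"
proof -
  define a where "a = e * group_elem g"
  have "central a"
    unfolding a_def e_def by (intro central_mult central_of_int central_group_elem)
  moreover have "\<not> ring_unit a"
    unfolding a_def using idem \<open>e \<noteq> 1\<close> by (rule idempotent_mult_not_unit)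
  ultimately have "ring_nilpotent (a * (a - 1)) \<or> ring_nilpotent (a * (a + 1))"
    using gw GWNC_central_nonunit by blast
  moreover have ge: "group_elem g * e = a"
    unfolding a_def by (rule group_elem_commute)
  then have "a * a = group_elem g * a"
    unfolding a_def by (metis idem mult.assoc)
  then have "a * (a - 1) = group_elem g * (a - e)" "a * (a + 1) = group_elem g * (a + e)"
    using ge by (simp_all add: right_diff_distrib distrib_left)
  ultimately have "ring_nilpotent (a - e) \<or> ring_nilpotent (a + e)"
    using nilpotent_group_elem_mult_cancel by metis
  then show ?thesis
    using natmul_prime_power_eq_0_if_unipotent[OF p] idem \<open>e \<noteq> 0\<close> tors
    unfolding a_def e_def by blast
qed

lemma natmul_two_power_eq_0_if_GWNC:
  fixes h :: "'g::ab_group_add"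
  assumes not_unit: "\<not> ring_unit (2::'r::ring_1)" and two: "ring_nilpotent (2::'r)"
    and gw: "GWNC TYPE('g \<Rightarrow>\<^sub>0 'r)"
  shows "\<exists>j. natmul (2 ^ j) h = 0"
proof -
  define a :: "'g \<Rightarrow>\<^sub>0 'r" where "a = 1 + group_elem h"
  have ca: "central a"
    unfolding a_def by (intro central_add central_one central_group_elem)
  have two_G: "ring_nilpotent (- 2 :: 'g \<Rightarrow>\<^sub>0 'r)"
    using two by (simp add: nilpotent_uminus nilpotent_numeral_group_ring)
  have "\<not> ring_unit a"
    unfolding a_def by (rule not_unit_one_plus_group_elem[OF not_unit])
  with GWNC_central_nonunit[OF gw ca]
  have "ring_nilpotent (a * (a - 1)) \<or> ring_nilpotent (a * (a + 1))"
    by blast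
  then have "ring_nilpotent (a * (a - 1))"
  proof
    assume "ring_nilpotent (a * (a - 1))"
    then show ?thesis .
  next
    assume "ring_nilpotent (a * (a + 1))"
    moreover have "ring_nilpotent (- 2 * a)"
      by (rule nilpotent_mult_commuting[OF two_G]) (metis ca central_def)
    moreover have "central (a * (a + 1))"
      by (intro central_mult central_add ca central_one)
    ultimately have "ring_nilpotent (a * (a + 1) + - 2 * a)"
      by (intro nilpotent_add_commuting) (simp_all add: central_def)
    moreover have "a * (a + 1) + - 2 * a = a * (a - 1)"
      by (simp add: algebra_simps mult_2)
    ultimately show ?thesis
      by simp
  qed
  moreover have "a * (a - 1) = group_elem h * (1 * group_elem h + 1)"
    unfolding a_def by (simp add: algebra_simps)
  ultimately have "ring_nilpotent (1 * group_elem h + (1 :: 'g \<Rightarrow>\<^sub>0 'r))"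
    using nilpotent_group_elem_mult_cancel by metis
  moreover have "ring_nilpotent (2 :: 'g \<Rightarrow>\<^sub>0 'r)"
    using two by (simp add: nilpotent_numeral_group_ring)
  then obtain k where "(2 :: 'g \<Rightarrow>\<^sub>0 'r) ^ k = 0"
    unfolding ring_nilpotent_def by blast
  ultimately show ?thesis
    using natmul_prime_power_eq_0_if_unipotent[where z = 1 and p = 2 and k = k and g = h and 'r = 'r]
    by simp
qed

lemma integral_idempotents_if_nilpotent_six:
  assumes six: "(6::'a::ring_1) ^ k = 0"
    and not_two: "\<not> ring_nilpotent (2::'a)" and not_three: "\<not> ring_nilpotent (3::'a)"
  obtains z z' :: int
  where "(of_int z :: 'a) * of_int z = of_int z" "(of_int z' :: 'a) * of_int z' = of_int z'"
    and "of_int z + (of_int z' :: 'a) = 1"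
    and "of_nat (3 ^ k) * (of_int z :: 'a) = 0" "of_nat (2 ^ k) * (of_int z' :: 'a) = 0"
    and "(of_int z :: 'a) \<noteq> 0" "(of_int z' :: 'a) \<noteq> 0"
proof -
  have "coprime ((2::int) ^ k) (3 ^ k)"
    by simp
  then obtain u v :: int where uv: "u * 2 ^ k + v * 3 ^ k = 1"
    by (metis bezout_int coprime_iff_gcd_eq_1)
  define e :: 'a where "e = of_int (u * 2 ^ k)"
  define e' :: 'a where "e' = of_int (v * 3 ^ k)"
  have "(of_int (2 ^ k * 3 ^ k) :: 'a) = 0"
    using six by (simp flip: power_mult_distrib)
  note split = idempotent_of_coprime_factorization[OF this uv, folded e_def e'_def]
  have sum: "e' = 1 - e"
    using split(4) by (simp add: eq_diff_eq add.commute)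
  have "e' * e' = e'"
    unfolding sum using split(1) by (simp add: algebra_simps)
  moreover have "e \<noteq> 0"
    using split(3) sum not_two unfolding ring_nilpotent_def by auto
  moreover have "e' \<noteq> 0"
    using split(2) sum not_three unfolding ring_nilpotent_def by auto
  ultimately show ?thesis
    using that[of "u * 2 ^ k" "v * 3 ^ k"] split unfolding e_def e'_def by simp
qed

lemma nilpotent_two_if_GWNC:
  fixes g :: "'g::ab_group_add"
  assumes not_unit: "\<not> ring_unit (2::'r::ring_1)" and "g \<noteq> 0"
    and gw: "GWNC TYPE('g \<Rightarrow>\<^sub>0 'r)"
  shows "ring_nilpotent (2::'r)"
proof (rule ccontr)
  assume "\<not> ring_nilpotent (2::'r)"
  then have not_two: "\<not> ring_nilpotent (2 :: 'g \<Rightarrow>\<^sub>0 'r)"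
    by (simp add: nilpotent_numeral_group_ring)
  have not_three: "\<not> ring_nilpotent (3 :: 'g \<Rightarrow>\<^sub>0 'r)"
    using not_unit unit_two_if_nilpotent_three by (auto simp: nilpotent_numeral_group_ring)
  have "\<not> ring_unit (2 :: 'g \<Rightarrow>\<^sub>0 'r)"
    using not_unit_one_plus_group_elem[OF not_unit, of 0] by simp
  then have "ring_nilpotent (2 * (2 - 1) :: 'g \<Rightarrow>\<^sub>0 'r) \<or> ring_nilpotent (2 * (2 + 1) :: 'g \<Rightarrow>\<^sub>0 'r)"
    by (intro GWNC_central_nonunit[OF gw]) simp_all
  with not_two obtain k where "(6 :: 'g \<Rightarrow>\<^sub>0 'r) ^ k = 0"
    unfolding ring_nilpotent_def by auto
  then obtain z z' :: int
    where "(of_int z :: 'g \<Rightarrow>\<^sub>0 'r) * of_int z = of_int z" "(of_int z' :: 'g \<Rightarrow>\<^sub>0 'r) * of_int z' = of_int z'"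
      and "of_int z + (of_int z' :: 'g \<Rightarrow>\<^sub>0 'r) = 1"
      and "of_nat (3 ^ k) * (of_int z :: 'g \<Rightarrow>\<^sub>0 'r) = 0" "of_nat (2 ^ k) * (of_int z' :: 'g \<Rightarrow>\<^sub>0 'r) = 0"
      and "(of_int z :: 'g \<Rightarrow>\<^sub>0 'r) \<noteq> 0" "(of_int z' :: 'g \<Rightarrow>\<^sub>0 'r) \<noteq> 0"
    using integral_idempotents_if_nilpotent_six not_two not_three by blast
  moreover from this have "(of_int z :: 'g \<Rightarrow>\<^sub>0 'r) \<noteq> 1" "(of_int z' :: 'g \<Rightarrow>\<^sub>0 'r) \<noteq> 1"
    by (auto simp: add_eq_0_iff)
  ultimately obtain a b where "natmul (3 ^ a) g = 0" "natmul (2 ^ b) g = 0"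
    using natmul_prime_power_eq_0_if_GWNC[OF gw, of 3 z k g] natmul_prime_power_eq_0_if_GWNC[OF gw, of 2 z' k g]
    by auto
  moreover have "coprime ((2::nat) ^ b) (3 ^ a)"
    by simp
  ultimately show False
    using natmul_coprime_eq_0 \<open>g \<noteq> 0\<close> by blast
qed

theorem theorem3p6:
  assumes "\<not> ring_unit (2::'r::ring_1)"
    and "\<exists>g::'g::ab_group_add. g \<noteq> 0"
    and "GWNC TYPE('g \<Rightarrow>\<^sub>0 'r)"
  shows "is_p_group 2 TYPE('g) \<and> ring_nilpotent (2::'r)"
proof
  obtain g :: 'g where "g \<noteq> 0"
    using assms(2) by blast
  show two: "ring_nilpotent (2::'r)"
    using nilpotent_two_if_GWNC[OF assms(1) \<open>g \<noteq> 0\<close> assms(3)] .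
  have "\<exists>i. add_order h = 2 ^ i" for h :: 'g
    using natmul_two_power_eq_0_if_GWNC[OF assms(1) two assms(3), of h] add_order_prime_power[of 2]
    by auto
  then show "is_p_group 2 TYPE('g)"
    unfolding is_p_group_def by blast
qed

end
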